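(* Let $\mathcal{G}=(\mathcal{V}_A\cup\mathcal{V}_T,\mathcal{E},w)$ be a weighted bipartite graph with $|\mathcal{V}_A|\le|\mathcal{V}_T|$ having a maximum matching, and let $e^*\in A(\mathcal{G})$ be a bottleneck edge. Let $\{\delta_e\}_{e\in\mathcal{E}}$ be perturbations with perturbed weights $\bar w_e=w_e+\delta_e$ such that for every $x\in\mathcal{E}$: $\bar w_x>\bar w_{e^*}$ if and only if $w_x>w_{e^*}$, and $\bar w_x<\bar w_{e^*}$ if and only if $w_x<w_{e^*}$. Then the bottleneck assignment $e^*$ is robust to $\{\delta_e\}$, i.e. $e^*\in A(\bar{\mathcal{G}})$.
   Context: A weighted bipartite graph $\mathcal{G}=(\mathcal{V}_A\cup\mathcal{V}_T,\mathcal{E},w)$ has disjoint vertex sets $\mathcal{V}_A,\mathcal{V}_T$, edge set $\mathcal{E}\subseteq\mathcal{V}_A\times\mathcal{V}_T$ and real edge weights $w_e$. A matching is a set of pairwise non-adjacent edges; a maximum matching is a matching covering every vertex of $\mathcal{V}_A$. For a graph $H$ with a maximum matching, $b(H)=\min_M\max_{e\in M}w_e$ over its maximum matchings; a bottleneck edge of $H$ is an edge $e$ with $w_e=b(H)$ lying in some maximum matching $M$ with $\max_{e'\in M}w_{e'}=b(H)$; $A(H)$ is the set of bottleneck edges. The perturbed graph $\bar{\mathcal{G}}$ has the same vertices and edges as $\mathcal{G}$ and weights $\bar w_e$; $e^*$ is robust to the perturbation if $e^*\in A(\bar{\mathcal{G}})$. *)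

theory Defs
  imports Complex_Main
begin

definition is_matching :: "('a \<times> 'b) set \<Rightarrow> ('a \<times> 'b) set \<Rightarrow> bool" where
  "is_matching E M \<longleftrightarrow> M \<subseteq> E \<and>
     (\<forall>e\<in>M. \<forall>e'\<in>M. e \<noteq> e' \<longrightarrow> fst e \<noteq> fst e' \<and> snd e \<noteq> snd e')"

text \<open>Maximum matching in the paper's sense: a matching covering every vertex of VA.\<close>
definition is_max_matching :: "'a set \<Rightarrow> ('a \<times> 'b) set \<Rightarrow> ('a \<times> 'b) set \<Rightarrow> bool" where
  "is_max_matching VA E M \<longleftrightarrow> is_matching E M \<and> (\<forall>a\<in>VA. \<exists>e\<in>M. fst e = a)"

definition mweight :: "(('a \<times> 'b) \<Rightarrow> real) \<Rightarrow> ('a \<times> 'b) set \<Rightarrow> real" where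
  "mweight w M = Max (w ` M)"

definition bottleneck_value ::
  "'a set \<Rightarrow> ('a \<times> 'b) set \<Rightarrow> (('a \<times> 'b) \<Rightarrow> real) \<Rightarrow> real" where
  "bottleneck_value VA E w = Min {mweight w M | M. is_max_matching VA E M}"

definition bottleneck_edges ::
  "'a set \<Rightarrow> ('a \<times> 'b) set \<Rightarrow> (('a \<times> 'b) \<Rightarrow> real) \<Rightarrow> ('a \<times> 'b) set" where
  "bottleneck_edges VA E w = {e. w e = bottleneck_value VA E w \<and>
     (\<exists>M. is_max_matching VA E M \<and> e \<in> M \<and> mweight w M = bottleneck_value VA E w)}"

end

theory Submission
  imports Defs
begin

text \<open>Whether an edge \<open>e\<close> is a bottleneck edge depends only on how the other weights compare
  with \<open>w e\<close>: \<open>e\<close> lies in some maximum matching all of whose weights are \<open>\<le> w e\<close>, and every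
  maximum matching contains an edge of weight \<open>\<ge> w e\<close>. A perturbation that preserves these
  comparisons therefore preserves both properties.\<close>

lemma max_matching_subset: "is_max_matching VA E M \<Longrightarrow> M \<subseteq> E"
  by (simp add: is_max_matching_def is_matching_def)

lemma max_matching_nonempty: "is_max_matching VA E M \<Longrightarrow> a \<in> VA \<Longrightarrow> M \<noteq> {}"
  by (auto simp: is_max_matching_def)

lemma finite_mweights: "finite E \<Longrightarrow> finite {mweight w M | M. is_max_matching VA E M}"
proof -
  have "{mweight w M | M. is_max_matching VA E M} \<subseteq> mweight w ` Pow E"
    using max_matching_subset by blast
  then show "finite E \<Longrightarrow> ?thesis"
    by (meson finite_Pow_iff finite_imageI finite_subset)
qed

lemma mweight_ge_iff:
  "finite M \<Longrightarrow> M \<noteq> {} \<Longrightarrow> c \<le> mweight w M \<longleftrightarrow> (\<exists>x\<in>M. c \<le> w x)"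
  by (simp add: mweight_def Max_ge_iff)

lemma mweight_eq_iff:
  "finite M \<Longrightarrow> e \<in> M \<Longrightarrow> mweight w M = w e \<longleftrightarrow> (\<forall>x\<in>M. w x \<le> w e)"
proof
  assume "finite M" "e \<in> M"
  show "mweight w M = w e \<Longrightarrow> \<forall>x\<in>M. w x \<le> w e"
    using \<open>finite M\<close> unfolding mweight_def by (metis Max_ge finite_imageI imageI)
  show "\<forall>x\<in>M. w x \<le> w e \<Longrightarrow> mweight w M = w e"
    using \<open>finite M\<close> \<open>e \<in> M\<close> unfolding mweight_def by (intro Max_eqI) auto
qed

lemma bottleneck_value_le_mweight:
  "finite E \<Longrightarrow> is_max_matching VA E M \<Longrightarrow> bottleneck_value VA E w \<le> mweight w M"
  unfolding bottleneck_value_def by (rule Min_le) (auto intro: finite_mweights)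

lemma bottleneck_edges_iff:
  assumes "finite E"
  shows "e \<in> bottleneck_edges VA E w \<longleftrightarrow>
    (\<exists>M. is_max_matching VA E M \<and> e \<in> M \<and> mweight w M = w e) \<and>
    (\<forall>M. is_max_matching VA E M \<longrightarrow> w e \<le> mweight w M)"
    (is "_ \<longleftrightarrow> ?optimal \<and> ?lower")
proof
  let ?S = "{mweight w M | M. is_max_matching VA E M}"
  have fin: "finite ?S"
    using assms(1) by (rule finite_mweights)
  show "e \<in> bottleneck_edges VA E w \<Longrightarrow> ?optimal \<and> ?lower"
    using assms(1) bottleneck_value_le_mweight by (fastforce simp: bottleneck_edges_def)
  assume "?optimal \<and> ?lower"
  then obtain M0 where M0: "is_max_matching VA E M0" "e \<in> M0" "mweight w M0 = w e"
    and lower: ?lower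
    by blast
  have "bottleneck_value VA E w = w e"
    unfolding bottleneck_value_def
  proof (rule antisym)
    show "Min ?S \<le> w e"
      using fin M0 by (metis (mono_tags, lifting) Min_le mem_Collect_eq)
    show "w e \<le> Min ?S"
      using fin M0(1) lower by (subst Min_ge_iff) auto
  qed
  then show "e \<in> bottleneck_edges VA E w"
    using M0 by (auto simp: bottleneck_edges_def)
qed

theorem bottleneck_edge_robust:
  assumes "finite E" and "E \<subseteq> VA \<times> VT"
    and "e \<in> bottleneck_edges VA E w"
    and below: "\<forall>x\<in>E. w x \<le> w e \<longrightarrow> w' x \<le> w' e"
    and above: "\<forall>x\<in>E. w e \<le> w x \<longrightarrow> w' e \<le> w' x"
  shows "e \<in> bottleneck_edges VA E w'"
proof -
  obtain M0 where M0: "is_max_matching VA E M0" "e \<in> M0" "mweight w M0 = w e"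
    and lower: "\<And>M. is_max_matching VA E M \<Longrightarrow> w e \<le> mweight w M"
    using assms(3) unfolding bottleneck_edges_iff[OF assms(1)] by blast
  have fin: "finite M" if "is_max_matching VA E M" for M
    using finite_subset[OF max_matching_subset[OF that] assms(1)] .
  have "e \<in> E"
    using max_matching_subset[OF M0(1)] M0(2) ..
  then have "fst e \<in> VA"
    using assms(2) mem_Times_iff by blast
  then have nonempty: "M \<noteq> {}" if "is_max_matching VA E M" for M
    by (rule max_matching_nonempty[OF that])
  have "\<forall>x\<in>M0. w x \<le> w e"
    using mweight_eq_iff[OF fin[OF M0(1)] M0(2)] M0(3) by simp
  then have "\<forall>x\<in>M0. w' x \<le> w' e"
    using below max_matching_subset[OF M0(1)] by auto
  then have "mweight w' M0 = w' e"
    using mweight_eq_iff[OF fin[OF M0(1)] M0(2)] by simp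
  moreover have "w' e \<le> mweight w' M" if M: "is_max_matching VA E M" for M
  proof -
    obtain x where "x \<in> M" "w e \<le> w x"
      using lower[OF M] mweight_ge_iff[OF fin[OF M] nonempty[OF M]] by auto
    then have "w' e \<le> w' x"
      using above max_matching_subset[OF M] by auto
    with \<open>x \<in> M\<close> show ?thesis
      using mweight_ge_iff[OF fin[OF M] nonempty[OF M]] by auto
  qed
  ultimately show ?thesis
    unfolding bottleneck_edges_iff[OF assms(1)] using M0(1,2) by blast
qed

theorem proposition2:
  fixes VA :: "'a set" and VT :: "'b set" and E :: "('a \<times> 'b) set"
    and w \<delta> :: "('a \<times> 'b) \<Rightarrow> real" and e_star :: "'a \<times> 'b"
  assumes "finite VA" and "finite VT" and "E \<subseteq> VA \<times> VT"
    and "card VA \<le> card VT"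
    and "\<exists>M. is_max_matching VA E M"
    and "e_star \<in> bottleneck_edges VA E w"
    and "\<forall>x\<in>E. (w x + \<delta> x > w e_star + \<delta> e_star) \<longleftrightarrow> (w x > w e_star)"
    and "\<forall>x\<in>E. (w x + \<delta> x < w e_star + \<delta> e_star) \<longleftrightarrow> (w x < w e_star)"
  shows "e_star \<in> bottleneck_edges VA E (\<lambda>e. w e + \<delta> e)"
proof (rule bottleneck_edge_robust[OF _ assms(3,6)])
  show "finite E"
    using assms(1-3) by (meson finite_SigmaI finite_subset)
  show "\<forall>x\<in>E. w x \<le> w e_star \<longrightarrow> w x + \<delta> x \<le> w e_star + \<delta> e_star"
    using assms(7) by (meson not_le)
  show "\<forall>x\<in>E. w e_star \<le> w x \<longrightarrow> w e_star + \<delta> e_star \<le> w x + \<delta> x"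
    using assms(8) by (meson not_le)
qed

end
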